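(* Let $t$ and $m$ be positive integers. Then there exist a constant $c>0$ and $X_0$ (depending on $m,t$) such that for all $X\ge X_0$, \[ \#\left\{ n\leq X : p_{mt,t}(n)\equiv 0\pmod{2} \right\} \geq c\sqrt{X/3}, \] i.e. $\#\{ n\leq X : p_{mt,t}(n)\equiv 0\pmod{2}\} \gg \sqrt{X/3}$ for large $X$.
   Context: A partition $\lambda$ of a non-negative integer $n$ is a non-increasing sequence of positive integers (its parts) summing to $n$. For positive integers $A$ and $a$, $\mathrm{mex}_{A,a}(\lambda)$ denotes the smallest positive integer congruent to $a$ modulo $A$ that is not a part of $\lambda$. Then $p_{A,a}(n)$ denotes the number of partitions $\lambda$ of $n$ satisfying $\mathrm{mex}_{A,a}(\lambda)\equiv a \pmod{2A}$. Here $n$ ranges over positive integers. *)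

theory Defs
  imports "HOL-Analysis.Analysis" "HOL-Library.Multiset"
begin

definition partitions :: "nat \<Rightarrow> nat multiset set" where
  "partitions n = {M. (\<forall>x \<in># M. 0 < x) \<and> sum_mset M = n}"

definition mex :: "nat \<Rightarrow> nat \<Rightarrow> nat multiset \<Rightarrow> nat" where
  "mex A a M = (LEAST k. 0 < k \<and> k mod A = a mod A \<and> k \<notin># M)"

definition p_mex :: "nat \<Rightarrow> nat \<Rightarrow> nat \<Rightarrow> nat" where
  "p_mex A a n = card {M \<in> partitions n. mex A a M mod (2 * A) = a mod (2 * A)}"

end

theory Submission
  imports Defs "HOL-Library.Z2" "HOL-Library.Disjoint_Sets" "HOL-Number_Theory.Cong"
begin

(* Let A = m t and s_j = t + (t + A) + ... + (t + (j - 1) A). A partition has mex_{A,t} congruent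
   to t modulo 2A iff the number J of initial terms t, t + A, ... it contains is even; counting
   partitions by J gives p_{A,t}(n) = sum_j p(n - s_j) (mod 2), with p the partition function.
   Euler's pentagonal number theorem modulo 2, proved with the involution moving the least part
   between a partition into distinct parts and an ordinary partition and with Franklin's
   involution, says that p(m - d) summed over the generalized pentagonal numbers d <= m is even
   for m > 0. Hence for n not of the form s_j the sum of p_{A,t}(n - d) over these d is even, and
   if their number is odd some p_{A,t}(n - d) is even. Below the 2K-th pentagonal number at least
   K^2 values of n have an odd number of pentagonal numbers d <= n, at most 3K of them are of the
   form s_j, and all others are sums e + d with p_{A,t}(e) even and d among 2K pentagonal numbers;
   so at least about K/2 values e < 4 K^2 have p_{A,t}(e) even. *)

section \<open>Parity by involutions\<close>

lemma even_card_involution: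
  assumes "\<And>x. x \<in> X \<Longrightarrow> f x \<in> X" "\<And>x. x \<in> X \<Longrightarrow> f (f x) = x"
    and "\<And>x. x \<in> X \<Longrightarrow> f x \<noteq> x"
  shows "even (card X)"
proof -
  have "(\<Sum>x\<in>X. 1 :: bit) = 0"
    by (rule sum_involution_eq_0[of X "\<lambda>_. 1" f]) (use assms in auto)
  then have "even (of_nat (card X) :: bit)"
    by simp
  then show ?thesis
    by (simp only: even_of_nat)
qed

lemma even_card_iff_even_card_fixpoints:
  assumes "finite X" "\<And>x. x \<in> X \<Longrightarrow> f x \<in> X" "\<And>x. x \<in> X \<Longrightarrow> f (f x) = x"
  shows "even (card X) \<longleftrightarrow> even (card {x\<in>X. f x = x})"
proof -
  have "even (card {x\<in>X. f x \<noteq> x})"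
    by (rule even_card_involution[of _ f]) (use assms in auto)
  moreover have "card X = card {x\<in>X. f x = x} + card {x\<in>X. f x \<noteq> x}"
    using assms(1) by (subst card_Un_disjoint[symmetric]) (auto intro: arg_cong[where f = card])
  ultimately show ?thesis
    by auto
qed

lemma member_le_sum_mset: "(x :: nat) \<in># M \<Longrightarrow> x \<le> sum_mset M"
  using sum_mset.remove by fastforce

lemma finite_partitions: "finite (partitions n)"
proof (rule finite_subset)
  show "partitions n \<subseteq> (\<Union>k\<le>n. multisets_of_size {1..n} k)"
  proof
    fix M assume "M \<in> partitions n"
    then have pos: "\<forall>x\<in>#M. 0 < x" and sum: "sum_mset M = n"
      by (auto simp: partitions_def)
    have "size M \<le> sum_mset M"
      unfolding size_eq_sum_mset using sum_mset_mono[of M "\<lambda>_. 1" "\<lambda>x. x"] pos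
      by (simp add: Suc_le_eq)
    moreover have "set_mset M \<subseteq> {1..n}"
      using pos sum member_le_sum_mset by fastforce
    ultimately show "M \<in> (\<Union>k\<le>n. multisets_of_size {1..n} k)"
      using sum by (auto simp: multisets_of_size_def)
  qed
qed (simp add: finite_multisets_of_size)

definition distinct_partitions :: "nat \<Rightarrow> nat set set" where
  "distinct_partitions n = {S. finite S \<and> 0 \<notin> S \<and> \<Sum>S = n}"

lemma finite_distinct_partitions: "finite (distinct_partitions n)"
proof (rule finite_subset)
  show "distinct_partitions n \<subseteq> Pow {..n}"
    by (auto simp: distinct_partitions_def intro: member_le_sum)
qed simp

definition partition_pairs :: "nat \<Rightarrow> (nat set \<times> nat multiset) set" where
  "partition_pairs m = {(S, M). finite S \<and> 0 \<notin> S \<and> (\<forall>x\<in>#M. 0 < x) \<and> \<Sum>S + sum_mset M = m}"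

lemma partition_pairs_eq:
  "partition_pairs m = (\<Union>d\<le>m. distinct_partitions d \<times> partitions (m - d))"
  unfolding partition_pairs_def distinct_partitions_def partitions_def by force

lemma card_partition_pairs:
  "card (partition_pairs m) = (\<Sum>d\<le>m. card (distinct_partitions d) * card (partitions (m - d)))"
  unfolding partition_pairs_eq
  by (subst card_UN_disjoint)
    (simp_all add: finite_distinct_partitions finite_partitions card_cartesian_product,
      auto simp: distinct_partitions_def)

definition move_least_part :: "nat set \<times> nat multiset \<Rightarrow> nat set \<times> nat multiset" where
  "move_least_part = (\<lambda>(S, M). let s = Min (S \<union> set_mset M) in
     if s \<in> S then (S - {s}, add_mset s M) else (insert s S, M - {#s#}))"

lemma move_least_part_involutive:
  assumes "finite S" "S \<union> set_mset M \<noteq> {}"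
  shows "move_least_part (move_least_part (S, M)) = (S, M)" and "move_least_part (S, M) \<noteq> (S, M)"
proof -
  define s where "s = Min (S \<union> set_mset M)"
  have s: "s \<in> S \<union> set_mset M"
    unfolding s_def using assms by (intro Min_in) auto
  show "move_least_part (move_least_part (S, M)) = (S, M)" "move_least_part (S, M) \<noteq> (S, M)"
  proof (atomize (full), cases "s \<in> S")
    case True
    have "(S - {s}) \<union> set_mset (add_mset s M) = S \<union> set_mset M"
      using True by auto
    then show "move_least_part (move_least_part (S, M)) = (S, M) \<and> move_least_part (S, M) \<noteq> (S, M)"
      using True by (simp add: move_least_part_def Let_def s_def[symmetric] insert_absorb)
  next
    case False
    then have "s \<in># M"
      using s by simp
    then have "set_mset M = insert s (set_mset (M - {#s#}))"
      by (metis insert_DiffM set_mset_add_mset_insert)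
    then have "insert s S \<union> set_mset (M - {#s#}) = S \<union> set_mset M"
      by auto
    moreover have "insert s S \<noteq> S"
      using False by blast
    ultimately show "move_least_part (move_least_part (S, M)) = (S, M) \<and> move_least_part (S, M) \<noteq> (S, M)"
      using False \<open>s \<in># M\<close> by (simp add: move_least_part_def Let_def s_def[symmetric] insert_DiffM)
  qed
qed

lemma move_least_part_partition_pairs:
  assumes "p \<in> partition_pairs m" "0 < m"
  shows "move_least_part p \<in> partition_pairs m"
proof -
  obtain S M where p: "p = (S, M)" and S: "finite S" "0 \<notin> S" and M: "\<forall>x\<in>#M. 0 < x"
    and sum: "\<Sum>S + sum_mset M = m"
    using assms(1) by (auto simp: partition_pairs_def)
  define s where "s = Min (S \<union> set_mset M)"
  have "s \<in> S \<union> set_mset M"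
    unfolding s_def using S(1) sum assms(2) by (intro Min_in) auto
  then consider "s \<in> S" | "s \<notin> S" "s \<in># M"
    by blast
  then show ?thesis
  proof cases
    case 1
    have "\<Sum>S = s + \<Sum>(S - {s})"
      using sum.remove[OF S(1) 1] .
    moreover have "0 < s"
      using 1 S(2) by (auto intro: gr0I)
    ultimately show ?thesis
      using p S M sum 1 by (auto simp: partition_pairs_def move_least_part_def Let_def s_def[symmetric])
  next
    case 2
    then have "sum_mset M = s + sum_mset (M - {#s#})"
      using sum_mset.remove by blast
    then show ?thesis
      using p S M sum 2
      by (auto simp: partition_pairs_def move_least_part_def Let_def s_def[symmetric] dest: in_diffD)
  qed
qed

lemma even_sum_distinct_partitions_times_partitions:
  assumes "0 < m"
  shows "even (\<Sum>d\<le>m. card (distinct_partitions d) * card (partitions (m - d)))"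
  unfolding card_partition_pairs[symmetric]
proof (rule even_card_involution[of _ move_least_part])
  fix p assume "p \<in> partition_pairs m"
  moreover obtain S M where "p = (S, M)"
    by fastforce
  ultimately have "finite S" "S \<union> set_mset M \<noteq> {}"
    using assms by (auto simp: partition_pairs_def)
  then show "move_least_part p \<in> partition_pairs m" "move_least_part (move_least_part p) = p"
    "move_least_part p \<noteq> p"
    using move_least_part_partition_pairs[OF _ assms] move_least_part_involutive
      \<open>p \<in> partition_pairs m\<close> \<open>p = (S, M)\<close>
    by auto
qed

section \<open>Franklin's involution\<close>

definition top_run :: "nat set \<Rightarrow> nat" where
  "top_run S = (LEAST i. Max S - i \<notin> S)"

lemma top_run_in: "i < top_run S \<Longrightarrow> Max S - i \<in> S"
  unfolding top_run_def using not_less_Least by blast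

lemma top_run_notin: "0 \<notin> S \<Longrightarrow> Max S - top_run S \<notin> S"
  unfolding top_run_def by (rule LeastI[of _ "Max S"]) simp

lemma top_run_le: "Max S - i \<notin> S \<Longrightarrow> top_run S \<le> i"
  unfolding top_run_def by (rule Least_le)

lemma le_top_run_iff:
  assumes "0 \<notin> S"
  shows "r \<le> top_run S \<longleftrightarrow> (\<forall>i<r. Max S - i \<in> S)"
  using top_run_in top_run_notin[OF assms] by (meson le_less_trans not_le)

lemma top_run_interval: "{Max S + 1 - top_run S..Max S} \<subseteq> S"
proof
  fix x assume x: "x \<in> {Max S + 1 - top_run S..Max S}"
  then have "Max S - (Max S - x) \<in> S"
    by (intro top_run_in) auto
  then show "x \<in> S"
    using x by simp
qed

text \<open>With \<open>s\<close> the least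
  part and \<open>r = top_run S\<close> the number of consecutive parts ending at the largest one,
  \<open>franklin_spread\<close> removes the part \<open>s\<close> and adds 1 to each of the \<open>s\<close> largest parts, and
  \<open>franklin_gather\<close> subtracts 1 from each of the \<open>r\<close> largest parts and adds the new least part
  \<open>r\<close>. The side conditions in \<open>franklin\<close> fail exactly for the staircases
  \<open>{j div 2 + 1..j}\<close>.\<close>

definition franklin_spread :: "nat set \<Rightarrow> nat set" where
  "franklin_spread S = insert (Max S + 1) (S - {Min S, Max S + 1 - Min S})"

definition franklin_gather :: "nat set \<Rightarrow> nat set" where
  "franklin_gather S = insert (top_run S) (insert (Max S - top_run S) (S - {Max S}))"

definition franklin :: "nat set \<Rightarrow> nat set" where
  "franklin S =
    (if S = {} then S
     else if Min S \<le> top_run S \<and> 2 * Min S \<le> Max S then franklin_spread S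
     else if top_run S < Min S \<and> Max S \<noteq> 2 * top_run S then franklin_gather S
     else S)"

lemma top_run_pos: "finite S \<Longrightarrow> S \<noteq> {} \<Longrightarrow> 0 \<notin> S \<Longrightarrow> 0 < top_run S"
  using le_top_run_iff[of S 1] by simp

lemma Max_Suc_diff_Min_mem:
  assumes "finite S" "S \<noteq> {}" "0 \<notin> S" "Min S \<le> top_run S"
  shows "Max S + 1 - Min S \<in> S"
proof (rule subsetD[OF top_run_interval])
  have "0 < Min S"
    using assms(1-3) Min_in by (fastforce intro: gr0I)
  then show "Max S + 1 - Min S \<in> {Max S + 1 - top_run S..Max S}"
    using assms(4) by auto
qed

lemma franklin_spread_shape:
  assumes S: "finite S" "S \<noteq> {}" "0 \<notin> S" and spread: "Min S \<le> top_run S" "2 * Min S \<le> Max S"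
  defines "T \<equiv> franklin_spread S"
  shows "finite T" "T \<noteq> {}" "0 \<notin> T" "\<Sum>T = \<Sum>S" "Max T = Max S + 1" "Min S < Min T"
proof -
  define s M where "s = Min S" and "M = Max S"
  define u where "u = M + 1 - s"
  have s: "s \<in> S" "\<And>x. x \<in> S \<Longrightarrow> s \<le> x" and M: "\<And>x. x \<in> S \<Longrightarrow> x \<le> M"
    using S by (auto simp: s_def M_def)
  have "u \<in> S" "s < u"
    using Max_Suc_diff_Min_mem[OF S spread(1)] spread(2) by (simp_all add: u_def s_def M_def)
  have "M + 1 \<notin> S"
    using M by fastforce
  have T: "T = insert (M + 1) (S - {s, u})"
    by (simp add: T_def franklin_spread_def s_def M_def u_def)
  show "finite T" "T \<noteq> {}" "0 \<notin> T"
    using T S by auto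
  have "\<Sum>S = \<Sum>(S - {s, u}) + (s + u)"
    using sum.subset_diff[of "{s, u}" S "\<lambda>x. x"] S(1) s(1) \<open>u \<in> S\<close> \<open>s < u\<close> by simp
  then show "\<Sum>T = \<Sum>S"
    using T S(1) \<open>M + 1 \<notin> S\<close> \<open>s < u\<close> by (simp add: u_def)
  show "Max T = M + 1"
    using T S(1) M by (intro Max_eqI) (auto intro: le_SucI)
  have "s < y" if "y \<in> T" for y
    using that T s(2) M \<open>s < u\<close> by (force simp: u_def)
  then show "Min S < Min T"
    using \<open>finite T\<close> \<open>T \<noteq> {}\<close> by (simp add: s_def)
qed

lemma franklin_spread_inverse:
  assumes S: "finite S" "S \<noteq> {}" "0 \<notin> S" and spread: "Min S \<le> top_run S" "2 * Min S \<le> Max S"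
  defines "T \<equiv> franklin_spread S"
  shows "top_run T = Min S" "franklin_gather T = S"
proof -
  define s M where "s = Min S" and "M = Max S"
  define u where "u = M + 1 - s"
  have "0 < s" "s \<in> S"
    using S Min_in by (auto simp: s_def intro: gr0I)
  have "u \<in> S"
    using Max_Suc_diff_Min_mem[OF S spread(1)] by (simp add: u_def s_def M_def)
  have "M + 1 \<notin> S"
    using Max_ge[OF S(1), of "M + 1"] by (auto simp: M_def)
  have T: "T = insert (M + 1) (S - {s, u})"
    by (simp add: T_def franklin_spread_def s_def M_def u_def)
  have Max_T: "Max T = M + 1" and "0 \<notin> T"
    using franklin_spread_shape[OF S spread] by (simp_all add: T_def M_def)
  have "s \<le> top_run T"
    unfolding le_top_run_iff[OF \<open>0 \<notin> T\<close>] Max_T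
  proof (intro allI impI)
    fix i assume "i < s"
    show "M + 1 - i \<in> T"
    proof (cases i)
      case (Suc k)
      have "M - k \<in> S"
        using top_run_in[of k S] \<open>i < s\<close> spread(1) Suc by (simp add: s_def M_def)
      moreover have "s < M - k" "u < M - k"
        using \<open>i < s\<close> spread(2) Suc by (auto simp: u_def s_def M_def)
      ultimately show ?thesis
        using T Suc by auto
    qed (simp add: T)
  qed
  moreover have "Max T - s \<notin> T"
    unfolding Max_T using \<open>0 < s\<close> by (simp add: T u_def)
  then have "top_run T \<le> s"
    by (rule top_run_le)
  ultimately show run_T: "top_run T = Min S"
    by (simp add: s_def)
  have "T - {M + 1} = S - {s, u}"
    using T \<open>M + 1 \<notin> S\<close> by auto
  then show "franklin_gather T = S"
    using \<open>s \<in> S\<close> \<open>u \<in> S\<close> by (auto simp: franklin_gather_def run_T Max_T s_def[symmetric] u_def)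
qed

lemma franklin_gather_bounds:
  assumes S: "finite S" "S \<noteq> {}" "0 \<notin> S" and gather: "top_run S < Min S" "Max S \<noteq> 2 * top_run S"
  shows "0 < top_run S" "2 * top_run S < Max S"
proof -
  show "0 < top_run S"
    by (rule top_run_pos[OF S])
  have "Max S - (top_run S - 1) \<in> S"
    using top_run_in[of "top_run S - 1" S] \<open>0 < top_run S\<close> by simp
  then have "top_run S < Max S - (top_run S - 1)"
    using gather(1) S(1) Min_le by (fastforce intro: less_le_trans)
  then show "2 * top_run S < Max S"
    using gather(2) by linarith
qed

lemma franklin_gather_shape:
  assumes S: "finite S" "S \<noteq> {}" "0 \<notin> S" and gather: "top_run S < Min S" "Max S \<noteq> 2 * top_run S"
  defines "T \<equiv> franklin_gather S"
  shows "finite T" "T \<noteq> {}" "0 \<notin> T" "\<Sum>T = \<Sum>S" "Max T = Max S - 1" "Min T = top_run S"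
proof -
  define r M where "r = top_run S" and "M = Max S"
  have M: "M \<in> S" "\<And>x. x \<in> S \<Longrightarrow> x \<le> M" and r_less: "\<And>x. x \<in> S \<Longrightarrow> r < x"
    using S gather(1) by (auto simp: M_def r_def)
  have "0 < r" "2 * r < M"
    using franklin_gather_bounds[OF S gather] by (simp_all add: r_def M_def)
  have "M - r \<notin> S"
    using top_run_notin[OF S(3)] by (simp add: r_def M_def)
  have T: "T = insert r (insert (M - r) (S - {M}))"
    by (simp add: T_def franklin_gather_def r_def M_def)
  show "finite T" "T \<noteq> {}" "0 \<notin> T"
    using T S \<open>0 < r\<close> \<open>2 * r < M\<close> by auto
  have "r \<notin> S"
    using r_less by blast
  then have "\<Sum>T = r + (M - r) + \<Sum>(S - {M})"
    using T S(1) \<open>M - r \<notin> S\<close> \<open>2 * r < M\<close> by simp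
  then show "\<Sum>T = \<Sum>S"
    using sum.remove[OF S(1) M(1), of "\<lambda>x. x"] \<open>2 * r < M\<close> by simp
  show "Max T = M - 1"
  proof (rule Max_eqI)
    show "M - 1 \<in> T"
    proof (cases "r = 1")
      case False
      then show ?thesis
        using top_run_in[of 1 S] \<open>0 < r\<close> \<open>2 * r < M\<close> by (auto simp: T r_def M_def)
    qed (simp add: T)
  qed (use T \<open>finite T\<close> M(2) \<open>0 < r\<close> \<open>2 * r < M\<close> le_antisym in \<open>fastforce+\<close>)
  have "Min T = r"
    using T \<open>finite T\<close> r_less \<open>2 * r < M\<close> by (intro Min_eqI) (auto intro: less_imp_le)
  then show "Min T = top_run S"
    by (simp add: r_def)
qed

lemma franklin_gather_inverse:
  assumes S: "finite S" "S \<noteq> {}" "0 \<notin> S" and gather: "top_run S < Min S" "Max S \<noteq> 2 * top_run S"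
  defines "T \<equiv> franklin_gather S"
  shows "top_run S \<le> top_run T" "franklin_spread T = S"
proof -
  define r M where "r = top_run S" and "M = Max S"
  have "M \<in> S" and r_less: "\<And>x. x \<in> S \<Longrightarrow> r < x"
    using S gather(1) by (auto simp: M_def r_def)
  have "0 < r" "2 * r < M"
    using franklin_gather_bounds[OF S gather] by (simp_all add: r_def M_def)
  have "M - r \<notin> S"
    using top_run_notin[OF S(3)] by (simp add: r_def M_def)
  have T: "T = insert r (insert (M - r) (S - {M}))"
    by (simp add: T_def franklin_gather_def r_def M_def)
  have Max_T: "Max T = M - 1" and Min_T: "Min T = r" and "0 \<notin> T"
    using franklin_gather_shape[OF S gather] by (simp_all add: T_def r_def M_def)
  show "top_run S \<le> top_run T"
    unfolding le_top_run_iff[OF \<open>0 \<notin> T\<close>] Max_T r_def[symmetric]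
  proof (intro allI impI)
    fix i assume "i < r"
    show "M - 1 - i \<in> T"
    proof (cases "i = r - 1")
      case False
      then have "M - Suc i \<in> S"
        using top_run_in[of "Suc i" S] \<open>i < r\<close> by (simp add: r_def M_def)
      then show ?thesis
        using T \<open>2 * r < M\<close> by auto
    qed (use T \<open>0 < r\<close> \<open>2 * r < M\<close> in auto)
  qed
  have "T - {r, M - r} = S - {M}"
    using T \<open>M - r \<notin> S\<close> r_less by auto
  then show "franklin_spread T = S"
    using \<open>M \<in> S\<close> \<open>2 * r < M\<close> by (auto simp: franklin_spread_def Max_T Min_T)
qed

lemma franklin_eq_spread:
  "S \<noteq> {} \<Longrightarrow> Min S \<le> top_run S \<Longrightarrow> 2 * Min S \<le> Max S \<Longrightarrow> franklin S = franklin_spread S"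
  by (simp add: franklin_def)

lemma franklin_eq_gather:
  "S \<noteq> {} \<Longrightarrow> top_run S < Min S \<Longrightarrow> Max S \<noteq> 2 * top_run S \<Longrightarrow> franklin S = franklin_gather S"
  by (simp add: franklin_def)

lemma franklin_eq_self:
  "S \<noteq> {} \<Longrightarrow> \<not> (Min S \<le> top_run S \<and> 2 * Min S \<le> Max S)
    \<Longrightarrow> \<not> (top_run S < Min S \<and> Max S \<noteq> 2 * top_run S) \<Longrightarrow> franklin S = S"
  unfolding franklin_def by (simp only: if_False if_not_P)

lemma franklin_distinct_partitions:
  assumes "S \<in> distinct_partitions n"
  shows "franklin S \<in> distinct_partitions n" and "franklin (franklin S) = S"
proof -
  have S: "finite S" "0 \<notin> S"
    using assms by (auto simp: distinct_partitions_def)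
  have "franklin S \<in> distinct_partitions n \<and> franklin (franklin S) = S"
  proof (cases "S \<noteq> {} \<and> Min S \<le> top_run S \<and> 2 * Min S \<le> Max S")
    case spread: True
    note T = franklin_spread_shape[OF S(1) _ S(2)] franklin_spread_inverse[OF S(1) _ S(2)] spread
    have "franklin (franklin_spread S) = franklin_gather (franklin_spread S)"
      using T by (intro franklin_eq_gather) auto
    then show ?thesis
      using T assms by (simp add: franklin_eq_spread distinct_partitions_def)
  next
    case no_spread: False
    show ?thesis
    proof (cases "S \<noteq> {} \<and> top_run S < Min S \<and> Max S \<noteq> 2 * top_run S")
      case gather: True
      note T = franklin_gather_shape[OF S(1) _ S(2)] franklin_gather_inverse[OF S(1) _ S(2)]
        franklin_gather_bounds[OF S(1) _ S(2)] gather
      have "franklin (franklin_gather S) = franklin_spread (franklin_gather S)"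
        using T by (intro franklin_eq_spread) auto
      then show ?thesis
        using T assms by (simp add: franklin_eq_gather distinct_partitions_def)
    next
      case False
      then have "franklin S = S"
        using no_spread by (auto simp: franklin_def)
      then show ?thesis
        using assms by simp
    qed
  qed
  then show "franklin S \<in> distinct_partitions n" and "franklin (franklin S) = S"
    by auto
qed

definition staircase :: "nat \<Rightarrow> nat set" where
  "staircase j = {j div 2 + 1..j}"

lemma franklin_staircase: "franklin (staircase j) = staircase j"
proof (cases "j = 0")
  case False
  define h where "h = j div 2"
  have S: "staircase j = {h + 1..j}" and ne: "staircase j \<noteq> {}"
    using False by (auto simp: staircase_def h_def)
  have Min: "Min (staircase j) = h + 1" and Max: "Max (staircase j) = j"
    using ne by (auto simp: S intro: Min_eqI Max_eqI)
  have "0 \<notin> staircase j"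
    by (simp add: staircase_def)
  then have "j - h \<le> top_run (staircase j)"
    unfolding le_top_run_iff[OF \<open>0 \<notin> staircase j\<close>] Max by (auto simp: S)
  moreover have "top_run (staircase j) \<le> j - h"
    by (rule top_run_le) (simp add: Max, simp add: S)
  ultimately have run: "top_run (staircase j) = j - h"
    by simp
  have "j = 2 * h \<or> j = 2 * h + 1"
    unfolding h_def by presburger
  then show ?thesis
    using ne by (intro franklin_eq_self) (auto simp: Min Max run)
qed (simp add: staircase_def franklin_def)

lemma franklin_fixpoint_conditions:
  assumes "finite S" "S \<noteq> {}" and fixed: "franklin S = S"
  shows "\<not> (Min S \<le> top_run S \<and> 2 * Min S \<le> Max S)"
    and "\<not> (top_run S < Min S \<and> Max S \<noteq> 2 * top_run S)"
proof
  assume "Min S \<le> top_run S \<and> 2 * Min S \<le> Max S"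
  then have "franklin S = franklin_spread S"
    using assms(2) by (intro franklin_eq_spread) auto
  moreover have "Max S + 1 \<in> franklin_spread S" "Max S + 1 \<notin> S"
    using Max_ge[OF assms(1), of "Max S + 1"] by (auto simp: franklin_spread_def)
  ultimately show False
    using fixed by simp
next
  show "\<not> (top_run S < Min S \<and> Max S \<noteq> 2 * top_run S)"
  proof
    assume gather: "top_run S < Min S \<and> Max S \<noteq> 2 * top_run S"
    then have "franklin S = franklin_gather S"
      using assms(2) by (intro franklin_eq_gather) auto
    moreover have "top_run S \<notin> S"
      using gather Min_le[OF assms(1), of "top_run S"] by linarith
    moreover have "top_run S \<in> franklin_gather S"
      by (simp add: franklin_gather_def)
    ultimately show False
      using fixed by simp
  qed
qed

lemma franklin_fixpoint_staircase:
  assumes S: "finite S" "0 \<notin> S" and fixed: "franklin S = S"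
  shows "\<exists>j. S = staircase j"
proof (cases "S = {}")
  case True
  then show ?thesis
    by (auto simp: staircase_def intro: exI[of _ 0])
next
  case False
  define s M r where "s = Min S" and "M = Max S" and "r = top_run S"
  have sub: "S \<subseteq> {s..M}" and "s \<in> S" and top: "{M + 1 - r..M} \<subseteq> S"
    using S False top_run_interval[of S] by (auto simp: s_def M_def r_def)
  have "0 < s"
    using \<open>s \<in> S\<close> S(2) by (auto intro: gr0I)
  have no_spread: "\<not> (s \<le> r \<and> 2 * s \<le> M)" and no_gather: "\<not> (r < s \<and> M \<noteq> 2 * r)"
    using franklin_fixpoint_conditions[OF S(1) False fixed] by (simp_all add: s_def M_def r_def)
  show ?thesis
  proof (cases "s \<le> r")
    case True
    then have "{s..M} \<subseteq> {M + 1 - r..M}"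
      using no_spread by auto
    then have "S = {s..M}"
      using sub top by blast
    moreover have "r \<le> M + 1 - s"
      unfolding r_def
    proof (rule top_run_le)
      show "Max S - (M + 1 - s) \<notin> S"
        using \<open>0 < s\<close> \<open>s \<in> S\<close> sub by (force simp: M_def[symmetric])
    qed
    ultimately have "S = staircase (2 * s - 1)"
      using True no_spread \<open>0 < s\<close> by (auto simp: staircase_def)
    then show ?thesis ..
  next
    case False
    then have "S = staircase (2 * r)"
      using sub top no_gather by (auto simp: staircase_def)
    then show ?thesis ..
  qed
qed

text \<open>\<open>pentagonal (2 * k) = k * (3 * k + 1) / 2\<close> and \<open>pentagonal (2 * k - 1) = k * (3 * k - 1) / 2\<close>
  enumerate the generalized pentagonal numbers in increasing order.\<close>

definition pentagonal :: "nat \<Rightarrow> nat" where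
  "pentagonal j = \<Sum>(staircase j)"

lemma pentagonal_Suc_even: "even j \<Longrightarrow> pentagonal (Suc j) = pentagonal j + Suc j"
proof -
  assume "even j"
  then have "staircase (Suc j) = insert (Suc j) (staircase j)"
    by (auto simp: staircase_def elim: evenE)
  then show ?thesis
    by (simp add: pentagonal_def staircase_def)
qed

lemma pentagonal_Suc_odd: "odd j \<Longrightarrow> pentagonal (Suc j) + (j div 2 + 1) = pentagonal j + Suc j"
proof -
  assume "odd j"
  then have "insert (j div 2 + 1) (staircase (Suc j)) = insert (Suc j) (staircase j)"
    and "j div 2 + 1 \<notin> staircase (Suc j)" "Suc j \<notin> staircase j"
    by (auto simp: staircase_def elim!: oddE)
  then have "\<Sum>(insert (j div 2 + 1) (staircase (Suc j))) = \<Sum>(insert (Suc j) (staircase j))"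
    by simp
  then show ?thesis
    using \<open>j div 2 + 1 \<notin> staircase (Suc j)\<close> \<open>Suc j \<notin> staircase j\<close>
    by (simp add: pentagonal_def staircase_def)
qed

lemma strict_mono_pentagonal: "strict_mono pentagonal"
proof (rule strict_mono_Suc_iff[THEN iffD2], intro allI)
  fix j
  show "pentagonal j < pentagonal (Suc j)"
  proof (cases "even j")
    case False
    then have "j div 2 < j"
      by (intro div_less_dividend) (auto simp: odd_pos)
    then show ?thesis
      using pentagonal_Suc_odd[OF False] by linarith
  qed (simp add: pentagonal_Suc_even)
qed

lemma pentagonal_le_square: "pentagonal j \<le> j * j"
proof -
  have "pentagonal j \<le> card (staircase j) * j"
    unfolding pentagonal_def using sum_bounded_above[of "staircase j" "\<lambda>x. x" j]
    by (auto simp: staircase_def)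
  also have "\<dots> \<le> j * j"
    by (simp add: staircase_def)
  finally show ?thesis .
qed

lemma fixpoints_franklin:
  "{S \<in> distinct_partitions n. franklin S = S} = staircase ` {j. pentagonal j = n}"
proof (intro antisym subsetI)
  fix S assume "S \<in> {S \<in> distinct_partitions n. franklin S = S}"
  then show "S \<in> staircase ` {j. pentagonal j = n}"
    using franklin_fixpoint_staircase by (fastforce simp: distinct_partitions_def pentagonal_def)
next
  fix S assume "S \<in> staircase ` {j. pentagonal j = n}"
  then obtain j where "S = staircase j" "pentagonal j = n"
    by blast
  then show "S \<in> {S \<in> distinct_partitions n. franklin S = S}"
    by (simp add: franklin_staircase) (auto simp: distinct_partitions_def pentagonal_def staircase_def)
qed

lemma odd_card_distinct_partitions_iff: "odd (card (distinct_partitions n)) \<longleftrightarrow> n \<in> range pentagonal"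
proof -
  have "{j. pentagonal j = n} = (if n \<in> range pentagonal then {inv pentagonal n} else {})"
    using strict_mono_imp_inj_on[OF strict_mono_pentagonal] by (auto simp: inj_eq f_inv_into_f)
  then have "card {S \<in> distinct_partitions n. franklin S = S} = (if n \<in> range pentagonal then 1 else 0)"
    by (simp add: fixpoints_franklin)
  moreover have "even (card (distinct_partitions n))
      \<longleftrightarrow> even (card {S \<in> distinct_partitions n. franklin S = S})"
    by (rule even_card_iff_even_card_fixpoints)
      (use finite_distinct_partitions franklin_distinct_partitions in auto)
  ultimately show ?thesis
    by simp
qed

definition pentagonals_upto :: "nat \<Rightarrow> nat set" where
  "pentagonals_upto n = {d \<in> range pentagonal. d \<le> n}"

lemma pentagonals_upto_eq: "pentagonals_upto n = {..n} \<inter> range pentagonal"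
  by (auto simp: pentagonals_upto_def)

lemma finite_pentagonals_upto: "finite (pentagonals_upto n)"
  unfolding pentagonals_upto_def by (rule finite_subset[of _ "{..n}"]) auto

lemma even_sum_partitions_pentagonals:
  assumes "0 < m"
  shows "even (\<Sum>d\<in>pentagonals_upto m. card (partitions (m - d)))"
proof -
  have "[card (distinct_partitions d) = of_bool (d \<in> range pentagonal)] (mod 2)" for d
    using odd_card_distinct_partitions_iff[of d] by (auto simp: cong_def elim!: oddE)
  then have "[\<Sum>d\<le>m. card (distinct_partitions d) * card (partitions (m - d))
      = \<Sum>d\<le>m. of_bool (d \<in> range pentagonal) * card (partitions (m - d))] (mod 2)"
    by (intro cong_sum cong_scalar_right)
  also have "(\<Sum>d\<le>m. of_bool (d \<in> range pentagonal) * card (partitions (m - d)))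
      = (\<Sum>d\<in>pentagonals_upto m. card (partitions (m - d)))"
    by (simp add: pentagonals_upto_eq sum.inter_restrict)
  finally show ?thesis
    using even_sum_distinct_partitions_times_partitions[OF assms] cong_dvd_iff by blast
qed

section \<open>Parity of the mex-restricted partition function\<close>

lemma mset_set_subseteq_iff: "finite X \<Longrightarrow> mset_set X \<subseteq># M \<longleftrightarrow> X \<subseteq> set_mset M"
  by (metis finite_set_mset_mset_set mset_set_set_mset_msubset set_mset_mono
      subset_imp_msubset_mset_set subset_mset.order_trans finite_set_mset)

definition mex_index :: "nat \<Rightarrow> nat \<Rightarrow> nat multiset \<Rightarrow> nat" where
  "mex_index A a M = (LEAST j. a + j * A \<notin># M)"

lemma mex_index_in: "i < mex_index A a M \<Longrightarrow> a + i * A \<in># M"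
  unfolding mex_index_def using not_less_Least by blast

lemma mex_index_le: "a + j * A \<notin># M \<Longrightarrow> mex_index A a M \<le> j"
  unfolding mex_index_def by (rule Least_le)

lemma sum_mset_progression_notin:
  fixes a A :: nat
  assumes "0 < a" "0 < A"
  shows "a + sum_mset M * A \<notin># M"
proof
  assume "a + sum_mset M * A \<in># M"
  then have "a + sum_mset M * A \<le> sum_mset M"
    by (rule member_le_sum_mset)
  moreover have "sum_mset M \<le> sum_mset M * A"
    using assms(2) by simp
  ultimately show False
    using assms(1) by linarith
qed

lemma mex_index_notin: "0 < a \<Longrightarrow> 0 < A \<Longrightarrow> a + mex_index A a M * A \<notin># M"
  unfolding mex_index_def by (rule LeastI, rule sum_mset_progression_notin)

lemma le_mex_index_iff:
  "0 < a \<Longrightarrow> 0 < A \<Longrightarrow> j \<le> mex_index A a M \<longleftrightarrow> (\<forall>i<j. a + i * A \<in># M)"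
  by (metis mex_index_in mex_index_notin le_less_trans not_le)

lemma mex_index_le_sum_mset: "0 < a \<Longrightarrow> 0 < A \<Longrightarrow> mex_index A a M \<le> sum_mset M"
  by (intro mex_index_le sum_mset_progression_notin)

lemma mex_eq_mex_index:
  assumes "0 < a" "a \<le> A"
  shows "mex A a M = a + mex_index A a M * A"
  unfolding mex_def
proof (rule Least_equality)
  show "0 < a + mex_index A a M * A \<and> (a + mex_index A a M * A) mod A = a mod A
      \<and> a + mex_index A a M * A \<notin># M"
    using assms mex_index_notin[of a A M] by simp
next
  fix y assume y: "0 < y \<and> y mod A = a mod A \<and> y \<notin># M"
  have "a \<le> y"
  proof (cases "a = A")
    case True
    then show ?thesis
      using y by (auto simp: mod_eq_0_iff_dvd dest: dvd_imp_le)
  next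
    case False
    then show ?thesis
      using y assms by (metis le_neq_implies_less mod_less mod_less_eq_dividend)
  qed
  moreover have "A dvd y - a"
    using y \<open>a \<le> y\<close> by (simp add: mod_eq_dvd_iff_nat)
  ultimately obtain j where j: "y = a + j * A"
    by (metis dvdE le_add_diff_inverse mult.commute)
  then have "mex_index A a M \<le> j"
    using y by (intro mex_index_le) simp
  then show "a + mex_index A a M * A \<le> y"
    using j by simp
qed

lemma progression_cong_start_iff: "0 < (A :: nat) \<Longrightarrow> [a + j * A = a] (mod 2 * A) \<longleftrightarrow> even j"
  by (simp add: cong_add_lcancel_0_nat cong_0_iff)

lemma p_mex_eq_card_even_mex_index:
  assumes "0 < a" "a \<le> A"
  shows "p_mex A a n = card {M \<in> partitions n. even (mex_index A a M)}"
  using progression_cong_start_iff[of A a] assms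
  by (simp add: p_mex_def mex_eq_mex_index cong_def)

definition progression_sum :: "nat \<Rightarrow> nat \<Rightarrow> nat \<Rightarrow> nat" where
  "progression_sum A a j = (\<Sum>i<j. a + i * A)"

lemma triangle_le_progression_sum:
  assumes "0 < a" "0 < A"
  shows "j * (j + 1) \<le> 2 * progression_sum A a j"
proof (induction j)
  case (Suc j)
  have "j \<le> j * A"
    using assms(2) by simp
  then have "Suc j \<le> a + j * A"
    using assms(1) by linarith
  then have "2 * Suc j \<le> 2 * (a + j * A)"
    by simp
  have "Suc j * (Suc j + 1) = j * (j + 1) + 2 * Suc j"
    by simp
  also have "\<dots> \<le> 2 * progression_sum A a j + 2 * (a + j * A)"
    using Suc.IH \<open>2 * Suc j \<le> 2 * (a + j * A)\<close> by (rule add_mono)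
  finally show ?case
    by (simp add: progression_sum_def)
qed (simp add: progression_sum_def)

definition progression_mset :: "nat \<Rightarrow> nat \<Rightarrow> nat \<Rightarrow> nat multiset" where
  "progression_mset A a j = mset_set ((\<lambda>i. a + i * A) ` {..<j})"

lemma sum_mset_progression_mset: "0 < A \<Longrightarrow> sum_mset (progression_mset A a j) = progression_sum A a j"
  using sum_unfold_sum_mset[of "\<lambda>x. x" "(\<lambda>i. a + i * A) ` {..<j}"]
  by (simp add: progression_mset_def progression_sum_def sum.reindex inj_on_def)

lemma le_mex_index_iff_subseteq:
  "0 < a \<Longrightarrow> 0 < A \<Longrightarrow> j \<le> mex_index A a M \<longleftrightarrow> progression_mset A a j \<subseteq># M"
  by (auto simp: le_mex_index_iff progression_mset_def mset_set_subseteq_iff)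

lemma card_partitions_le_mex_index:
  assumes "0 < a" "0 < A"
  shows "card {M \<in> partitions n. j \<le> mex_index A a M}
    = (if progression_sum A a j \<le> n then card (partitions (n - progression_sum A a j)) else 0)"
proof -
  let ?B = "progression_mset A a j" and ?s = "progression_sum A a j"
  have sum_B: "sum_mset ?B = ?s"
    using assms(2) by (rule sum_mset_progression_mset)
  have B_pos: "\<forall>x\<in>#?B. 0 < x"
    using assms(1) by (simp add: progression_mset_def)
  note sub_iff = le_mex_index_iff_subseteq[OF assms]
  show ?thesis
  proof (cases "?s \<le> n")
    case True
    have "bij_betw (\<lambda>M. M - ?B) {M \<in> partitions n. j \<le> mex_index A a M} (partitions (n - ?s))"
    proof (rule bij_betw_byWitness[where f' = "\<lambda>N. N + ?B"])
      show "(\<lambda>M. M - ?B) ` {M \<in> partitions n. j \<le> mex_index A a M} \<subseteq> partitions (n - ?s)"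
        by (auto simp: partitions_def sub_iff sum_B sum_mset_diff dest: in_diffD)
      show "(\<lambda>N. N + ?B) ` partitions (n - ?s) \<subseteq> {M \<in> partitions n. j \<le> mex_index A a M}"
        using True B_pos by (auto simp: partitions_def sub_iff sum_B)
    qed (auto simp: sub_iff subset_mset.diff_add)
    then show ?thesis
      using True by (simp add: bij_betw_same_card)
  next
    case False
    have "sum_mset ?B \<le> sum_mset M" if "?B \<subseteq># M" for M
      using that by (metis le_add1 subset_mset.le_iff_add sum_mset.union)
    then have empty: "{M \<in> partitions n. j \<le> mex_index A a M} = {}"
      using False by (auto simp: sub_iff partitions_def sum_B)
    show ?thesis
      unfolding empty using False by simp
  qed
qed

lemma le_progression_sum: "0 < a \<Longrightarrow> 0 < A \<Longrightarrow> j \<le> progression_sum A a j"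
  using triangle_le_progression_sum[of a A j] by (cases j) auto

lemma finite_progression_sum_le: "0 < a \<Longrightarrow> 0 < A \<Longrightarrow> finite {j. progression_sum A a j \<le> n}"
  by (rule finite_subset[of _ "{..n}"]) (auto dest: le_trans[OF le_progression_sum])

lemma p_mex_cong_sum_partitions:
  assumes "0 < a" "a \<le> A"
  shows "[p_mex A a n = (\<Sum>j | progression_sum A a j \<le> n.
    card (partitions (n - progression_sum A a j)))] (mod 2)"
proof -
  let ?P = "partitions n" and ?J = "mex_index A a" and ?s = "progression_sum A a"
  have "0 < A"
    using assms by simp
  have J_le: "?J M \<le> n" if "M \<in> ?P" for M
    using mex_index_le_sum_mset[OF assms(1) \<open>0 < A\<close>, of M] that by (simp add: partitions_def)
  have "[p_mex A a n = (\<Sum>M\<in>?P. ?J M + 1)] (mod 2)"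
    unfolding p_mex_eq_card_even_mex_index[OF assms] card_eq_sum sum.inter_filter[OF finite_partitions]
    by (intro cong_sum) (auto simp: cong_def elim!: evenE oddE)
  also have "(\<Sum>M\<in>?P. ?J M + 1) = (\<Sum>M\<in>?P. card {j \<in> {..n}. j \<le> ?J M})"
  proof (intro sum.cong refl)
    fix M assume "M \<in> ?P"
    then have "{j \<in> {..n}. j \<le> ?J M} = {..?J M}"
      using J_le[of M] by auto
    then show "?J M + 1 = card {j \<in> {..n}. j \<le> ?J M}"
      by simp
  qed
  also have "\<dots> = (\<Sum>j\<le>n. card {M \<in> ?P. j \<le> ?J M})"
    using sum.swap_restrict[OF finite_partitions finite_atMost, where g = "\<lambda>_ _. 1::nat" and R = "\<lambda>M j. j \<le> ?J M"]
    by simp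
  also have "\<dots> = (\<Sum>j\<le>n. if ?s j \<le> n then card (partitions (n - ?s j)) else 0)"
    by (simp add: card_partitions_le_mex_index[OF assms(1) \<open>0 < A\<close>])
  also have "\<dots> = (\<Sum>j | ?s j \<le> n. card (partitions (n - ?s j)))"
    using le_progression_sum[OF assms(1) \<open>0 < A\<close>]
    by (simp add: sum.inter_filter[symmetric]) (auto intro!: sum.cong dest: le_trans)
  finally show ?thesis .
qed

lemma even_sum_p_mex_pentagonals:
  assumes "0 < a" "a \<le> A" "n \<notin> range (progression_sum A a)"
  shows "even (\<Sum>d\<in>pentagonals_upto n. p_mex A a (n - d))"
proof -
  let ?s = "progression_sum A a" and ?p = "\<lambda>k. card (partitions k)"
  have "0 < A"
    using assms by simp
  have fin: "finite {j. ?s j \<le> n}"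
    by (rule finite_progression_sum_le[OF assms(1) \<open>0 < A\<close>])
  have "[\<Sum>d\<in>pentagonals_upto n. p_mex A a (n - d)
      = \<Sum>d\<in>pentagonals_upto n. \<Sum>j | ?s j \<le> n - d. ?p (n - d - ?s j)] (mod 2)"
    by (intro cong_sum p_mex_cong_sum_partitions assms(1,2))
  also have "(\<Sum>d\<in>pentagonals_upto n. \<Sum>j | ?s j \<le> n - d. ?p (n - d - ?s j))
      = (\<Sum>d\<in>pentagonals_upto n. \<Sum>j\<in>{j \<in> {j. ?s j \<le> n}. d + ?s j \<le> n}. ?p (n - ?s j - d))"
    by (intro sum.cong) (auto simp: pentagonals_upto_def add.commute)
  also have "\<dots> = (\<Sum>j | ?s j \<le> n. \<Sum>d\<in>{d \<in> pentagonals_upto n. d + ?s j \<le> n}. ?p (n - ?s j - d))"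
    by (rule sum.swap_restrict[OF finite_pentagonals_upto fin])
  also have "\<dots> = (\<Sum>j | ?s j \<le> n. \<Sum>d\<in>pentagonals_upto (n - ?s j). ?p (n - ?s j - d))"
    by (intro sum.cong) (auto simp: pentagonals_upto_def)
  finally have cong: "[\<Sum>d\<in>pentagonals_upto n. p_mex A a (n - d)
      = \<Sum>j | ?s j \<le> n. \<Sum>d\<in>pentagonals_upto (n - ?s j). ?p (n - ?s j - d)] (mod 2)" .
  have even_inner: "even (\<Sum>d\<in>pentagonals_upto (n - ?s j). ?p (n - ?s j - d))" if "?s j \<le> n" for j
    using assms(3) that by (intro even_sum_partitions_pentagonals) (auto simp: le_less)
  have "even (\<Sum>j | ?s j \<le> n. \<Sum>d\<in>pentagonals_upto (n - ?s j). ?p (n - ?s j - d))"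
    by (rule dvd_sum, rule even_inner) simp
  then show ?thesis
    using cong cong_dvd_iff by blast
qed

lemma ex_even_p_mex:
  assumes "0 < a" "a \<le> A" "n \<notin> range (progression_sum A a)"
    and "odd (card (pentagonals_upto n))"
  shows "\<exists>d\<in>pentagonals_upto n. even (p_mex A a (n - d))"
proof (rule ccontr)
  assume "\<not> ?thesis"
  then have "{d \<in> pentagonals_upto n. odd (p_mex A a (n - d))} = pentagonals_upto n"
    by auto
  then show False
    using even_sum_p_mex_pentagonals[OF assms(1-3)] assms(4)
    by (simp add: even_sum_iff[OF finite_pentagonals_upto])
qed

section \<open>Counting\<close>

lemma pentagonals_upto_between:
  assumes "pentagonal k \<le> n" "n < pentagonal (Suc k)"
  shows "pentagonals_upto n = pentagonal ` {..k}"
proof (intro antisym subsetI)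
  fix d assume "d \<in> pentagonals_upto n"
  then obtain j where "d = pentagonal j" "pentagonal j < pentagonal (Suc k)"
    using assms(2) by (auto simp: pentagonals_upto_def)
  then show "d \<in> pentagonal ` {..k}"
    using strict_mono_less[OF strict_mono_pentagonal] by auto
next
  fix d assume "d \<in> pentagonal ` {..k}"
  then show "d \<in> pentagonals_upto n"
    using strict_mono_less_eq[OF strict_mono_pentagonal] assms(1)
    by (auto simp: pentagonals_upto_def intro: le_trans)
qed

lemma card_pentagonals_upto_between:
  "pentagonal k \<le> n \<Longrightarrow> n < pentagonal (Suc k) \<Longrightarrow> card (pentagonals_upto n) = Suc k"
  using strict_mono_imp_inj_on[OF strict_mono_pentagonal]
  by (simp add: pentagonals_upto_between card_image inj_on_subset)

lemma square_le_card_odd_pentagonals_upto: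
  "K * K \<le> card {n. n < pentagonal (2 * K) \<and> odd (card (pentagonals_upto n))}"
proof (induction K)
  case (Suc K)
  let ?O = "\<lambda>x. {n. n < x \<and> odd (card (pentagonals_upto n))}"
  let ?I = "{pentagonal (2 * K)..<pentagonal (Suc (2 * K))}"
  have "pentagonal (Suc (2 * K)) \<le> pentagonal (2 * Suc K)"
    using strict_mono_less_eq[OF strict_mono_pentagonal] by simp
  then have "?O (pentagonal (2 * K)) \<union> ?I \<subseteq> ?O (pentagonal (2 * Suc K))"
    using strict_mono_less[OF strict_mono_pentagonal, of "2 * K" "Suc (2 * K)"]
    by (auto simp: card_pentagonals_upto_between)
  then have "card (?O (pentagonal (2 * K)) \<union> ?I) \<le> card (?O (pentagonal (2 * Suc K)))"
    by (rule card_mono[rotated]) simp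
  moreover have "card (?O (pentagonal (2 * K)) \<union> ?I) = card (?O (pentagonal (2 * K))) + Suc (2 * K)"
    by (subst card_Un_disjoint) (auto simp: pentagonal_Suc_even)
  ultimately show ?case
    using Suc.IH by simp
qed simp

lemma card_pentagonals_below: "card {d \<in> range pentagonal. d < pentagonal k} \<le> k"
proof -
  have "{d \<in> range pentagonal. d < pentagonal k} \<subseteq> pentagonal ` {..<k}"
    using strict_mono_less[OF strict_mono_pentagonal] by auto
  then have "card {d \<in> range pentagonal. d < pentagonal k} \<le> card (pentagonal ` {..<k})"
    by (intro card_mono) auto
  also have "\<dots> \<le> k"
    using card_image_le[of "{..<k}" pentagonal] by simp
  finally show ?thesis .
qed

lemma card_progression_sums_below:
  assumes "0 < a" "0 < A" "2 * N \<le> k * k"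
  shows "card {n. n < N \<and> n \<in> range (progression_sum A a)} \<le> k"
proof -
  have "i < k" if "progression_sum A a i < N" for i
  proof (rule ccontr)
    assume "\<not> i < k"
    then have "k * k \<le> i * (i + 1)"
      by (intro mult_le_mono) auto
    then show False
      using triangle_le_progression_sum[OF assms(1,2), of i] that assms(3) by linarith
  qed
  then have "{n. n < N \<and> n \<in> range (progression_sum A a)} \<subseteq> progression_sum A a ` {..<k}"
    by auto
  then have "card {n. n < N \<and> n \<in> range (progression_sum A a)} \<le> card (progression_sum A a ` {..<k})"
    by (intro card_mono) auto
  also have "\<dots> \<le> k"
    using card_image_le[of "{..<k}" "progression_sum A a"] by simp
  finally show ?thesis .
qed

lemma odd_pentagonals_upto_subset_sumset:
  assumes "0 < a" "a \<le> A"
  shows "{n. n < N \<and> odd (card (pentagonals_upto n))} - range (progression_sum A a)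
    \<subseteq> (\<lambda>(e, d). e + d) ` ({e. e < N \<and> even (p_mex A a e)} \<times> {d \<in> range pentagonal. d < N})"
proof
  fix n assume n: "n \<in> {n. n < N \<and> odd (card (pentagonals_upto n))} - range (progression_sum A a)"
  then obtain d where d: "d \<in> pentagonals_upto n" "even (p_mex A a (n - d))"
    using ex_even_p_mex[OF assms] by auto
  then have "(n - d, d) \<in> {e. e < N \<and> even (p_mex A a e)} \<times> {d \<in> range pentagonal. d < N}"
    and "n = (n - d) + d"
    using n by (auto simp: pentagonals_upto_def)
  then show "n \<in> (\<lambda>(e, d). e + d) ` ({e. e < N \<and> even (p_mex A a e)} \<times> {d \<in> range pentagonal. d < N})"
    by (metis (no_types, lifting) case_prod_conv image_eqI)
qed

lemma square_le_card_even_p_mex: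
  assumes "0 < a" "a \<le> A"
  shows "K * K \<le> 3 * K + 2 * K * card {n. n < pentagonal (2 * K) \<and> even (p_mex A a n)}"
proof -
  define N where "N = pentagonal (2 * K)"
  define Ev where "Ev = {n. n < N \<and> even (p_mex A a n)}"
  define Pe where "Pe = {d \<in> range pentagonal. d < N}"
  define Ss where "Ss = {n. n < N \<and> n \<in> range (progression_sum A a)}"
  define Od where "Od = {n. n < N \<and> odd (card (pentagonals_upto n))}"
  have fin: "finite Ev" "finite Pe" "finite Ss" "finite Od"
    by (auto simp: Ev_def Pe_def Ss_def Od_def)
  have "card (Od - Ss) \<le> card ((\<lambda>(e, d). e + d) ` (Ev \<times> Pe))"
    using odd_pentagonals_upto_subset_sumset[OF assms, of N] fin
    by (intro card_mono) (auto simp: Od_def Ss_def Ev_def Pe_def)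
  also have "\<dots> \<le> card Ev * card Pe"
    using card_image_le[of "Ev \<times> Pe" "\<lambda>(e, d). e + d"] fin by (simp add: card_cartesian_product)
  also have "\<dots> \<le> card Ev * (2 * K)"
    unfolding Pe_def N_def by (intro mult_le_mono2 card_pentagonals_below)
  finally have sumset: "card (Od - Ss) \<le> card Ev * (2 * K)" .
  have "N \<le> 4 * (K * K)"
    using pentagonal_le_square[of "2 * K"] by (simp add: N_def)
  then have "card Ss \<le> 3 * K"
    unfolding Ss_def using assms by (intro card_progression_sums_below) auto
  moreover have "K * K \<le> card Od"
    unfolding Od_def N_def by (rule square_le_card_odd_pentagonals_upto)
  moreover have "card Od \<le> card ((Od - Ss) \<union> Ss)"
    using fin by (intro card_mono) auto
  moreover have "card ((Od - Ss) \<union> Ss) \<le> card (Od - Ss) + card Ss"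
    by (rule card_Un_le)
  ultimately have "K * K \<le> 3 * K + 2 * K * card Ev"
    using sumset by (simp add: mult.commute)
  then show ?thesis
    by (simp add: Ev_def N_def)
qed

lemma le_card_even_p_mex:
  assumes "0 < a" "a \<le> A"
  shows "K \<le> 3 + 2 * card {n. n < 4 * K * K \<and> even (p_mex A a n)}"
proof (cases "K = 0")
  case False
  let ?E = "\<lambda>N. card {n. n < N \<and> even (p_mex A a n)}"
  have "?E (pentagonal (2 * K)) \<le> ?E (4 * K * K)"
    using pentagonal_le_square[of "2 * K"] by (intro card_mono) auto
  then have "2 * K * ?E (pentagonal (2 * K)) \<le> 2 * K * ?E (4 * K * K)"
    by (rule mult_le_mono2)
  then have "K * K \<le> 3 * K + 2 * K * ?E (4 * K * K)"
    using square_le_card_even_p_mex[OF assms, of K] by linarith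
  then have "K * K \<le> K * (3 + 2 * ?E (4 * K * K))"
    by (simp add: algebra_simps)
  then show ?thesis
    using False by simp
qed simp

lemma exists_nat_near_half_sqrt:
  assumes "0 \<le> X"
  shows "\<exists>K. real (4 * K * K) \<le> X \<and> sqrt X / 2 - 1 \<le> real K"
proof (intro exI conjI)
  define K where "K = nat \<lfloor>sqrt X / 2\<rfloor>"
  have "real K = of_int \<lfloor>sqrt X / 2\<rfloor>"
    using assms by (simp add: K_def)
  then have K: "real K \<le> sqrt X / 2" "sqrt X / 2 - 1 \<le> real K"
    using floor_correct[of "sqrt X / 2"] by linarith+
  have "real (4 * K * K) = (2 * real K)\<^sup>2"
    by (simp add: power2_eq_square)
  also have "\<dots> \<le> (sqrt X)\<^sup>2"
    using K(1) by (intro power_mono) auto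
  finally show "real (4 * K * K) \<le> X"
    using assms by simp
  show "sqrt X / 2 - 1 \<le> real K"
    by (fact K(2))
qed

lemma card_less_le_card_le_plus_one:
  fixes P :: "nat \<Rightarrow> bool"
  assumes "real N \<le> X"
  shows "card {n. n < N \<and> P n} \<le> card {n. 1 \<le> n \<and> real n \<le> X \<and> P n} + 1"
proof -
  have "{n. n < N \<and> P n} \<subseteq> insert 0 {n. 1 \<le> n \<and> real n \<le> X \<and> P n}"
    using assms by auto
  moreover have fin: "finite {n. 1 \<le> n \<and> real n \<le> X \<and> P n}"
  proof (rule finite_subset)
    show "{n. 1 \<le> n \<and> real n \<le> X \<and> P n} \<subseteq> {..nat \<lceil>X\<rceil>}"
    proof
      fix n assume "n \<in> {n. 1 \<le> n \<and> real n \<le> X \<and> P n}"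
      then have "real n \<le> X"
        by simp
      then have "real n \<le> real (nat \<lceil>X\<rceil>)"
        using real_nat_ceiling_ge[of X] by linarith
      then show "n \<in> {..nat \<lceil>X\<rceil>}"
        by simp
    qed
  qed simp
  ultimately have "card {n. n < N \<and> P n} \<le> card (insert 0 {n. 1 \<le> n \<and> real n \<le> X \<and> P n})"
    by (intro card_mono) auto
  also have "\<dots> = card {n. 1 \<le> n \<and> real n \<le> X \<and> P n} + 1"
    using fin by simp
  finally show ?thesis .
qed

lemma sqrt_le_card_of_linear_bound:
  fixes P :: "nat \<Rightarrow> bool"
  assumes bound: "\<And>K. K \<le> a + b * card {n. n < 4 * K * K \<and> P n}"
  shows "\<exists>c>0. \<exists>X0. \<forall>X\<ge>X0. c * sqrt X \<le> real (card {n. 1 \<le> n \<and> real n \<le> X \<and> P n})"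
proof (intro exI conjI allI impI)
  show "0 < 1 / (4 * (real b + 1))"
    by simp
  fix X :: real
  assume X: "(4 * (real a + real b + 1))\<^sup>2 \<le> X"
  define C where "C = card {n. 1 \<le> n \<and> real n \<le> X \<and> P n}"
  have "0 \<le> X"
    using X by (meson order_trans zero_le_power2)
  have "4 * (real a + real b + 1) \<le> sqrt X"
    using real_sqrt_le_mono[OF X] by simp
  then have sqrt_X: "real a + real b + 1 \<le> sqrt X / 4"
    by simp
  obtain K where K: "real (4 * K * K) \<le> X" "sqrt X / 2 - 1 \<le> real K"
    using exists_nat_near_half_sqrt[OF \<open>0 \<le> X\<close>] by blast
  have "b * card {n. n < 4 * K * K \<and> P n} \<le> b * (C + 1)"
    unfolding C_def by (intro mult_le_mono2 card_less_le_card_le_plus_one K(1))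
  then have "K \<le> a + b * (C + 1)"
    using bound[of K] by linarith
  then have "real K \<le> real (a + b * (C + 1))"
    by (simp only: of_nat_le_iff)
  then have "real K \<le> real a + real b * real C + real b"
    by (simp add: algebra_simps)
  then have "sqrt X / 4 \<le> real b * real C"
    using K(2) sqrt_X by linarith
  also have "\<dots> \<le> (real b + 1) * real C"
    by (simp add: algebra_simps)
  finally show "1 / (4 * (real b + 1)) * sqrt X \<le> real C"
    by (simp add: field_simps)
qed

theorem theorem1p1:
  fixes t m :: nat
  assumes "0 < t" and "0 < m"
  shows "\<exists>c :: real. c > 0 \<and> (\<exists>X0 :: real. \<forall>X :: real. X \<ge> X0 \<longrightarrow>
           real (card {n :: nat. 1 \<le> n \<and> real n \<le> X \<and> even (p_mex (m * t) t n)})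
             \<ge> c * sqrt (X / 3))"
proof -
  have "t \<le> m * t"
    using assms(2) by simp
  obtain c X0 where "0 < c" and bound: "\<forall>X\<ge>X0.
      c * sqrt X \<le> real (card {n. 1 \<le> n \<and> real n \<le> X \<and> even (p_mex (m * t) t n)})"
    using sqrt_le_card_of_linear_bound[OF le_card_even_p_mex[OF assms(1) \<open>t \<le> m * t\<close>]] by blast
  have "c * sqrt (X / 3) \<le> real (card {n. 1 \<le> n \<and> real n \<le> X \<and> even (p_mex (m * t) t n)})"
    if "max X0 0 \<le> X" for X
  proof -
    have "c * sqrt (X / 3) \<le> c * sqrt X"
      using that \<open>0 < c\<close> by (intro mult_left_mono real_sqrt_le_mono) auto
    also have "\<dots> \<le> real (card {n. 1 \<le> n \<and> real n \<le> X \<and> even (p_mex (m * t) t n)})"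
      using bound that by simp
    finally show ?thesis .
  qed
  then show ?thesis
    using \<open>0 < c\<close> by blast
qed

end
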